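(* Let $f:\mathbb{R}^d\to\mathbb{R}$ be bounded below by $f^*$ (i.e. $f(x)\ge f^*$ for all $x$) and smooth with non-negative constants $L_1,\dots,L_d$, i.e. $$f(y)\le f(x)+\langle\nabla f(x),y-x\rangle+\sum_{i=1}^d\frac{L_i}{2}(y_i-x_i)^2\quad\text{for all }x,y\in\mathbb{R}^d,$$ and let $\bar L:=\frac1d\sum_{i=1}^d L_i$. Suppose the Success Probability Bounds (SPB) assumption holds. Consider single-node signSGD with Option 1: starting from $x_0\in\mathbb{R}^d$, $x_{k+1}=x_k-\gamma_k\,\mathrm{sign}\,\hat g(x_k)$, where at each iteration $\hat g(x_k)$ is a fresh draw of the estimator at the current point $x_k$. (a) If $\gamma_k=\gamma_0/\sqrt{k+1}$ with $\gamma_0>0$, then for every integer $K\ge 2$, $$\min_{0\le k<K}\mathbb{E}\|\nabla f(x_k)\|_\rho\le\frac{f(x_0)-f^*}{\gamma_0\sqrt K}+\frac{3\gamma_0 d\bar L}{2}\frac{\log K}{\sqrt K}$$ ($\log$ is the natural logarithm). (b) If $\gamma_k\equiv\gamma>0$, then for every $K\ge1$, $$\frac1K\sum_{k=0}^{K-1}\mathbb{E}\|\nabla f(x_k)\|_\rho\le\frac{f(x_0)-f^*}{\gamma K}+\frac{\gamma d\bar L}{2}.$$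
   Context: Notation: $g(x):=\nabla f(x)$. For $t\in\mathbb{R}$, $\mathrm{sign}\,t=1$ if $t>0$, $0$ if $t=0$, $-1$ if $t<0$; for vectors sign is applied entrywise. SPB assumption: for every $x\in\mathbb{R}^d$ one has access to an independent (not necessarily unbiased) random estimator $\hat g(x)\in\mathbb{R}^d$ of $g(x)$ such that for every $i\in\{1,\dots,d\}$ with $g_i(x)\neq0$, the success probability $\rho_i(x):=\mathrm{Prob}(\mathrm{sign}\,\hat g_i(x)=\mathrm{sign}\,g_i(x))$ satisfies $\rho_i(x)>\tfrac12$. The $\rho$-norm is $\|g(x)\|_\rho:=\sum_{i=1}^d(2\rho_i(x)-1)|g_i(x)|$ (terms with $g_i(x)=0$ vanish). Expectations are over all randomness of the algorithm. *)

theory Defs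
  imports "HOL-Probability.Probability"
begin

text \<open>Entrywise sign of a vector (note: the library's sgn on vectors is normalisation,
  so we define the entrywise version explicitly).\<close>
definition signv :: "real^'n \<Rightarrow> real^'n" where
  "signv v = (\<chi> i. sgn (v $ i))"

text \<open>Success probability rho_i(x) = Prob(sign ghat_i(x) = sign g_i(x)),
  where G x is the law of the estimator ghat(x) and g is the gradient.\<close>
definition succ_prob :: "(real^'n \<Rightarrow> (real^'n) measure) \<Rightarrow> (real^'n \<Rightarrow> real^'n) \<Rightarrow> real^'n \<Rightarrow> 'n \<Rightarrow> real" where
  "succ_prob G g x i = measure (G x) {v \<in> space (G x). sgn (v $ i) = sgn (g x $ i)}"

definition rho_norm :: "(real^'n \<Rightarrow> (real^'n) measure) \<Rightarrow> (real^'n \<Rightarrow> real^'n) \<Rightarrow> real^'n \<Rightarrow> real" where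
  "rho_norm G g x = (\<Sum>i\<in>UNIV. (2 * succ_prob G g x i - 1) * \<bar>g x $ i\<bar>)"

primrec signsgd_law :: "(real^'n \<Rightarrow> (real^'n) measure) \<Rightarrow> real^'n \<Rightarrow> (nat \<Rightarrow> real) \<Rightarrow> nat \<Rightarrow> (real^'n) measure" where
  "signsgd_law G x0 \<gamma> 0 = return borel x0"
| "signsgd_law G x0 \<gamma> (Suc k) =
     signsgd_law G x0 \<gamma> k \<bind> (\<lambda>x. distr (G x) borel (\<lambda>v. x - \<gamma> k *\<^sub>R signv v))"

definition exp_rho_norm :: "(real^'n \<Rightarrow> (real^'n) measure) \<Rightarrow> (real^'n \<Rightarrow> real^'n) \<Rightarrow> real^'n \<Rightarrow> (nat \<Rightarrow> real) \<Rightarrow> nat \<Rightarrow> real" where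
  "exp_rho_norm G g x0 \<gamma> k = (\<integral>x. rho_norm G g x \<partial>(signsgd_law G x0 \<gamma> k))"

end

theory Submission
  imports Defs
begin

text \<open>One step x' = x - c sign v of signSGD moves every coordinate by at most c, so smoothness gives
  f x' \<le> f x - c \<Sum>i g_i(x) sgn v_i + c^2 \<Sum>i L_i / 2. For v distributed like the estimator,
  g_i E[sgn v_i] \<ge> (2 rho_i - 1) |g_i| coordinatewise, hence E f x' \<le> f x - c ||g x||_rho + c^2 \<Sum>i L_i / 2.
  Taking expectations over the iterates and telescoping yields
  \<Sum>k<K. gamma_k E||g x_k||_rho \<le> f x0 - f* + (\<Sum>i L_i / 2) \<Sum>k<K. gamma_k^2.
  The minimum is at most the gamma-weighted mean, and for gamma_k = gamma_0 / sqrt (k + 1) one has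
  \<Sum>gamma_k \<ge> gamma_0 sqrt K and \<Sum>gamma_k^2 = gamma_0^2 H_K \<le> 3 gamma_0^2 ln K for K \<ge> 2.\<close>

lemma borel_measurable_gradient:
  fixes f :: "'a::euclidean_space \<Rightarrow> real"
  assumes grad: "\<And>x. (f has_derivative (\<lambda>h. g x \<bullet> h)) (at x)"
  shows "g \<in> borel_measurable borel"
proof (rule borel_measurable_euclidean_space[THEN iffD2], intro ballI)
  fix b :: 'a
  have [measurable]: "f \<in> borel_measurable borel"
    by (intro borel_measurable_continuous_onI continuous_at_imp_continuous_on ballI
        has_derivative_continuous[OF grad])
  define t :: "nat \<Rightarrow> real" where "t n = inverse (real (Suc n))" for n
  define q where "q n x = (f (x + t n *\<^sub>R b) - f x) / t n" for n x
  have "(\<lambda>n. q n x) \<longlonglongrightarrow> g x \<bullet> b" for x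
  proof -
    have "((\<lambda>s. x + s *\<^sub>R b) has_derivative (\<lambda>s. s *\<^sub>R b)) (at 0)"
      by (auto intro!: derivative_eq_intros)
    from has_derivative_compose[OF this grad]
    have "((\<lambda>s. f (x + s *\<^sub>R b)) has_real_derivative g x \<bullet> b) (at 0)"
      by (rule has_derivative_imp_has_field_derivative) simp
    then have "((\<lambda>s. (f (x + s *\<^sub>R b) - f x) / s) \<longlongrightarrow> g x \<bullet> b) (at 0)"
      by (simp add: DERIV_def)
    moreover have "filterlim t (at 0) sequentially"
      unfolding filterlim_at t_def using LIMSEQ_inverse_real_of_nat by simp
    ultimately show ?thesis
      unfolding q_def by (rule filterlim_compose)
  qed
  moreover have "q n \<in> borel_measurable borel" for n
    unfolding q_def by measurable
  ultimately show "(\<lambda>x. g x \<bullet> b) \<in> borel_measurable borel"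
    by (rule borel_measurable_LIMSEQ_real)
qed

lemma borel_measurable_vec_lambda:
  fixes f :: "'a \<Rightarrow> 'n::finite \<Rightarrow> real"
  assumes "\<And>i. (\<lambda>x. f x i) \<in> borel_measurable M"
  shows "(\<lambda>x. \<chi> i. f x i) \<in> borel_measurable M"
proof (rule borel_measurable_euclidean_space[THEN iffD2], intro ballI)
  fix b :: "real^'n" assume "b \<in> Basis"
  then obtain i where "b = axis i 1" by (auto simp: Basis_vec_def)
  then show "(\<lambda>x. (\<chi> i. f x i) \<bullet> b) \<in> borel_measurable M"
    using assms by (simp add: inner_axis)
qed

lemma borel_measurable_vec_nth[measurable]: "(\<lambda>x::real^'n. x $ i) \<in> borel_measurable borel"
  by (intro borel_measurable_continuous_onI continuous_intros)

lemma borel_measurable_signv[measurable]: "signv \<in> borel_measurable borel"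
  unfolding signv_def by (intro borel_measurable_vec_lambda) measurable

lemma (in prob_space) sign_agreement_le_expectation_sgn:
  assumes [measurable]: "X \<in> borel_measurable M"
  shows "(2 * prob {v \<in> space M. sgn (X v) = sgn a} - 1) * \<bar>a\<bar> \<le> a * expectation (\<lambda>v. sgn (X v))"
proof -
  define A where "A = {v \<in> space M. sgn (X v) = sgn a}"
  have A: "A \<in> events" unfolding A_def by measurable
  have "\<bar>a\<bar> * (2 * prob A - 1) = expectation (\<lambda>v. \<bar>a\<bar> * (2 * indicator A v - 1))"
    using A by (subst integral_mult_right_zero, subst Bochner_Integration.integral_diff)
      (auto simp: prob_space less_top[symmetric])
  also have "\<dots> \<le> expectation (\<lambda>v. a * sgn (X v))"
  proof (rule integral_mono)
    show "integrable M (\<lambda>v. \<bar>a\<bar> * (2 * indicator A v - 1))"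
      using A by (intro Bochner_Integration.integrable_diff integrable_mult_right
          integrable_real_indicator integrable_const) (auto simp: less_top[symmetric])
    show "integrable M (\<lambda>v. a * sgn (X v))"
      by (intro integrable_mult_right integrable_const_bound[where B=1]) (auto simp: abs_sgn_eq)
    show "\<bar>a\<bar> * (2 * indicator A v - 1) \<le> a * sgn (X v)" for v
      by (cases "v \<in> A") (auto simp: A_def sgn_if abs_if)
  qed
  finally show ?thesis
    by (simp add: A_def mult.commute)
qed

definition signsgd_step :: "(real^'n \<Rightarrow> (real^'n) measure) \<Rightarrow> real \<Rightarrow> real^'n \<Rightarrow> (real^'n) measure" where
  "signsgd_step G c x = distr (G x) borel (\<lambda>v. x - c *\<^sub>R signv v)"

lemma signsgd_law_Suc:
  "signsgd_law G x0 \<gamma> (Suc k) = signsgd_law G x0 \<gamma> k \<bind> signsgd_step G (\<gamma> k)"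
  by (simp add: signsgd_step_def[abs_def])

locale signsgd =
  fixes f :: "real^'n \<Rightarrow> real"
    and g :: "real^'n \<Rightarrow> real^'n"
    and G :: "real^'n \<Rightarrow> (real^'n) measure"
    and L :: "'n \<Rightarrow> real"
    and fstar :: real
  assumes grad: "\<And>x. (f has_derivative (\<lambda>h. g x \<bullet> h)) (at x)"
    and lower: "\<And>x. f x \<ge> fstar"
    and L_nonneg: "\<And>i. L i \<ge> 0"
    and smooth: "\<And>x y. f y \<le> f x + g x \<bullet> (y - x) + (\<Sum>i\<in>UNIV. L i / 2 * (y $ i - x $ i)^2)"
    and G_kernel: "G \<in> borel \<rightarrow>\<^sub>M prob_algebra borel"
    and SPB: "\<And>x i. g x $ i \<noteq> 0 \<Longrightarrow> succ_prob G g x i > 1/2"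
begin

lemma borel_measurable_f[measurable]: "f \<in> borel_measurable borel"
  by (intro borel_measurable_continuous_onI continuous_at_imp_continuous_on ballI
      has_derivative_continuous[OF grad])

lemma borel_measurable_g_nth[measurable]: "(\<lambda>x. g x $ i) \<in> borel_measurable borel"
  by (rule measurable_compose[OF borel_measurable_gradient[OF grad]]) measurable

lemma prob_space_G: "prob_space (G x)"
  and sets_G: "sets (G x) = sets borel"
  using measurable_space[OF G_kernel, of x] by (auto simp: space_prob_algebra)

lemma space_G: "space (G x) = UNIV"
  using sets_eq_imp_space_eq[OF sets_G] by simp

lemma borel_measurable_succ_prob[measurable]:
  "(\<lambda>x. succ_prob G g x i) \<in> borel_measurable borel"
proof -
  have "Sigma UNIV (\<lambda>x. {v. sgn (v $ i) = sgn (g x $ i)})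
      = {z \<in> space (borel \<Otimes>\<^sub>M borel). sgn (snd z $ i) = sgn (g (fst z) $ i)}"
    by (auto simp: space_pair_measure)
  also have "\<dots> \<in> sets (borel \<Otimes>\<^sub>M borel)"
    by measurable
  finally show ?thesis
    unfolding succ_prob_def space_G
    by (intro measure_measurable_prob_algebra2[OF _ G_kernel]) simp
qed

lemma borel_measurable_rho_norm[measurable]: "rho_norm G g \<in> borel_measurable borel"
  unfolding rho_norm_def by measurable

lemma rho_norm_nonneg: "rho_norm G g x \<ge> 0"
  unfolding rho_norm_def
proof (rule sum_nonneg)
  show "0 \<le> (2 * succ_prob G g x i - 1) * \<bar>g x $ i\<bar>" for i
    using SPB[of x i] by (cases "g x $ i = 0") auto
qed

lemma rho_norm_le_expected_sign:
  "rho_norm G g x \<le> (\<Sum>i\<in>UNIV. g x $ i * (\<integral>v. sgn (v $ i) \<partial>G x))"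
  unfolding rho_norm_def succ_prob_def
  by (intro sum_mono prob_space.sign_agreement_le_expectation_sgn[OF prob_space_G])
    (simp add: measurable_cong_sets[OF sets_G refl])

lemma f_signv_step_le:
  "f (x - c *\<^sub>R signv v) - fstar
     \<le> f x - fstar - c * (\<Sum>i\<in>UNIV. g x $ i * sgn (v $ i)) + c\<^sup>2 * ((\<Sum>i\<in>UNIV. L i) / 2)"
proof -
  have "(\<Sum>i\<in>UNIV. L i / 2 * ((x - c *\<^sub>R signv v) $ i - x $ i)\<^sup>2) \<le> (\<Sum>i\<in>UNIV. L i / 2 * c\<^sup>2)"
  proof (rule sum_mono)
    fix i
    have "((x - c *\<^sub>R signv v) $ i - x $ i)\<^sup>2 = c\<^sup>2 * (sgn (v $ i))\<^sup>2"
      by (simp add: signv_def power_mult_distrib)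
    also have "\<dots> \<le> c\<^sup>2"
      by (simp add: sgn_if)
    finally show "L i / 2 * ((x - c *\<^sub>R signv v) $ i - x $ i)\<^sup>2 \<le> L i / 2 * c\<^sup>2"
      using L_nonneg[of i] by (intro mult_left_mono) auto
  qed
  also have "\<dots> = c\<^sup>2 * ((\<Sum>i\<in>UNIV. L i) / 2)"
    by (simp add: sum_distrib_left sum_divide_distrib mult_ac)
  finally have quadratic: "(\<Sum>i\<in>UNIV. L i / 2 * ((x - c *\<^sub>R signv v) $ i - x $ i)\<^sup>2)
      \<le> c\<^sup>2 * ((\<Sum>i\<in>UNIV. L i) / 2)" .
  have linear: "g x \<bullet> ((x - c *\<^sub>R signv v) - x) = - c * (\<Sum>i\<in>UNIV. g x $ i * sgn (v $ i))"
    by (simp add: inner_vec_def signv_def sum_distrib_left sum_negf algebra_simps)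
  show ?thesis
    using smooth[where x=x and y="x - c *\<^sub>R signv v"] quadratic linear by linarith
qed

lemma integrable_sgn_nth: "integrable (G x) (\<lambda>v. sgn (v $ i))"
proof -
  interpret prob_space "G x" by (rule prob_space_G)
  show ?thesis
    by (rule integrable_const_bound[where B=1])
      (auto simp: measurable_cong_sets[OF sets_G refl] abs_sgn_eq)
qed

lemma nn_integral_signsgd_step_le:
  assumes c: "c \<ge> 0"
  shows "(\<integral>\<^sup>+y. ennreal (f y - fstar) \<partial>signsgd_step G c x) + ennreal (c * rho_norm G g x)
     \<le> ennreal (f x - fstar + c\<^sup>2 * ((\<Sum>i\<in>UNIV. L i) / 2))"
proof -
  interpret prob_space "G x" by (rule prob_space_G)
  define \<Lambda> where "\<Lambda> = (\<Sum>i\<in>UNIV. L i) / 2"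
  define R where "R v = f x - fstar - c * (\<Sum>i\<in>UNIV. g x $ i * sgn (v $ i)) + c\<^sup>2 * \<Lambda>" for v
  have R: "f (x - c *\<^sub>R signv v) - fstar \<le> R v" for v
    unfolding R_def \<Lambda>_def by (rule f_signv_step_le)
  have R_nonneg: "0 \<le> R v" for v
    using R[of v] lower[of "x - c *\<^sub>R signv v"] by linarith
  have R_integrable: "integrable (G x) R"
    unfolding R_def
    by (intro Bochner_Integration.integrable_add Bochner_Integration.integrable_diff
        integrable_mult_right Bochner_Integration.integrable_sum integrable_sgn_nth integrable_const)
  have "(\<integral>v. R v \<partial>G x) = f x - fstar - c * (\<Sum>i\<in>UNIV. g x $ i * (\<integral>v. sgn (v $ i) \<partial>G x)) + c\<^sup>2 * \<Lambda>"
    unfolding R_def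
    by (simp add: Bochner_Integration.integral_sum integrable_sgn_nth prob_space)
  also have "\<dots> \<le> f x - fstar - c * rho_norm G g x + c\<^sup>2 * \<Lambda>"
    using rho_norm_le_expected_sign[of x] c by (simp add: mult_left_mono)
  finally have int_R_le: "(\<integral>v. R v \<partial>G x) \<le> f x - fstar - c * rho_norm G g x + c\<^sup>2 * \<Lambda>" .
  have "(\<integral>\<^sup>+y. ennreal (f y - fstar) \<partial>signsgd_step G c x)
      = (\<integral>\<^sup>+v. ennreal (f (x - c *\<^sub>R signv v) - fstar) \<partial>G x)"
    unfolding signsgd_step_def
    by (rule nn_integral_distr) (simp_all add: measurable_cong_sets[OF sets_G refl])
  also have "\<dots> \<le> (\<integral>\<^sup>+v. ennreal (R v) \<partial>G x)"
    by (intro nn_integral_mono ennreal_leI R)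
  also have "\<dots> = ennreal (\<integral>v. R v \<partial>G x)"
    by (rule nn_integral_eq_integral[OF R_integrable]) (simp add: R_nonneg)
  finally have "(\<integral>\<^sup>+y. ennreal (f y - fstar) \<partial>signsgd_step G c x) + ennreal (c * rho_norm G g x)
      \<le> ennreal (\<integral>v. R v \<partial>G x) + ennreal (c * rho_norm G g x)"
    by (rule add_right_mono)
  also have "\<dots> = ennreal ((\<integral>v. R v \<partial>G x) + c * rho_norm G g x)"
    using Bochner_Integration.integral_nonneg[of "G x" R] R_nonneg c rho_norm_nonneg[of x]
    by simp
  also have "\<dots> \<le> ennreal (f x - fstar + c\<^sup>2 * \<Lambda>)"
    using int_R_le by (intro ennreal_leI) simp
  finally show ?thesis
    unfolding \<Lambda>_def .
qed

lemma signsgd_step_kernel: "signsgd_step G c \<in> borel \<rightarrow>\<^sub>M prob_algebra borel"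
  unfolding signsgd_step_def[abs_def]
  by (rule measurable_distr_prob_space2[OF G_kernel]) measurable

lemma signsgd_law_prob: "signsgd_law G x0 \<gamma> k \<in> space (prob_algebra borel)"
proof (induction k)
  case 0
  show ?case
    using measurable_space[OF measurable_return_prob_space, of x0 borel] by simp
next
  case (Suc k)
  then show ?case
    unfolding signsgd_law_Suc
    using sets_bind'[OF Suc signsgd_step_kernel] prob_space_bind'[OF Suc signsgd_step_kernel]
    by (simp add: space_prob_algebra)
qed

text \<open>Nothing guarantees that f is integrable along the iterates, so its expectation is taken
  as the nonnegative integral of f - f*.\<close>

lemma nn_integral_bind_signsgd_step_le:
  assumes c: "c \<ge> 0" and M: "M \<in> space (prob_algebra borel)"
  shows "(\<integral>\<^sup>+y. ennreal (f y - fstar) \<partial>(M \<bind> signsgd_step G c))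
      + ennreal c * (\<integral>\<^sup>+x. ennreal (rho_norm G g x) \<partial>M)
    \<le> (\<integral>\<^sup>+x. ennreal (f x - fstar) \<partial>M) + ennreal (c\<^sup>2 * ((\<Sum>i\<in>UNIV. L i) / 2))"
proof -
  interpret prob_space M using M by (simp add: space_prob_algebra)
  have sets_M: "sets M = sets borel" using M by (simp add: space_prob_algebra)
  note measurable_M = measurable_cong_sets[OF sets_M refl]
  define \<Lambda> where "\<Lambda> = (\<Sum>i\<in>UNIV. L i) / 2"
  have \<Lambda>: "\<Lambda> \<ge> 0" unfolding \<Lambda>_def using L_nonneg by (simp add: sum_nonneg)
  have step: "signsgd_step G c \<in> M \<rightarrow>\<^sub>M subprob_algebra borel"
    unfolding measurable_M by (rule measurable_prob_algebraD[OF signsgd_step_kernel])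
  have descent_measurable: "(\<lambda>x. \<integral>\<^sup>+y. ennreal (f y - fstar) \<partial>signsgd_step G c x) \<in> borel_measurable M"
    by (rule measurable_compose[OF step nn_integral_measurable_subprob_algebra]) measurable
  have rho_measurable: "(\<lambda>x. ennreal (rho_norm G g x)) \<in> borel_measurable M"
    unfolding measurable_M by measurable
  have scaled_rho_measurable: "(\<lambda>x. ennreal (c * rho_norm G g x)) \<in> borel_measurable M"
    unfolding measurable_M by measurable
  have "ennreal c * (\<integral>\<^sup>+x. ennreal (rho_norm G g x) \<partial>M) = (\<integral>\<^sup>+x. ennreal (c * rho_norm G g x) \<partial>M)"
    using c rho_norm_nonneg by (simp add: ennreal_mult nn_integral_cmult[OF rho_measurable])
  moreover have "(\<integral>\<^sup>+y. ennreal (f y - fstar) \<partial>(M \<bind> signsgd_step G c))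
      = (\<integral>\<^sup>+x. \<integral>\<^sup>+y. ennreal (f y - fstar) \<partial>signsgd_step G c x \<partial>M)"
    by (rule nn_integral_bind[OF _ step]) measurable
  ultimately have "(\<integral>\<^sup>+y. ennreal (f y - fstar) \<partial>(M \<bind> signsgd_step G c))
      + ennreal c * (\<integral>\<^sup>+x. ennreal (rho_norm G g x) \<partial>M)
    = (\<integral>\<^sup>+x. (\<integral>\<^sup>+y. ennreal (f y - fstar) \<partial>signsgd_step G c x) + ennreal (c * rho_norm G g x) \<partial>M)"
    by (simp only: nn_integral_add[OF descent_measurable scaled_rho_measurable])
  also have "\<dots> \<le> (\<integral>\<^sup>+x. ennreal (f x - fstar) + ennreal (c\<^sup>2 * \<Lambda>) \<partial>M)"
  proof (rule nn_integral_mono)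
    show "(\<integral>\<^sup>+y. ennreal (f y - fstar) \<partial>signsgd_step G c x) + ennreal (c * rho_norm G g x)
        \<le> ennreal (f x - fstar) + ennreal (c\<^sup>2 * \<Lambda>)" for x
      using nn_integral_signsgd_step_le[OF c, of x] lower[of x] \<Lambda> unfolding \<Lambda>_def by simp
  qed
  also have "\<dots> = (\<integral>\<^sup>+x. ennreal (f x - fstar) \<partial>M) + ennreal (c\<^sup>2 * \<Lambda>)"
    by (subst nn_integral_add) (simp_all add: measurable_M emeasure_space_1)
  finally show ?thesis
    unfolding \<Lambda>_def .
qed

lemma signsgd_telescoping:
  assumes \<gamma>: "\<And>k. \<gamma> k \<ge> 0"
  shows "(\<integral>\<^sup>+y. ennreal (f y - fstar) \<partial>signsgd_law G x0 \<gamma> K)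
      + (\<Sum>k<K. ennreal (\<gamma> k) * (\<integral>\<^sup>+x. ennreal (rho_norm G g x) \<partial>signsgd_law G x0 \<gamma> k))
    \<le> ennreal (f x0 - fstar) + (\<Sum>k<K. ennreal ((\<gamma> k)\<^sup>2 * ((\<Sum>i\<in>UNIV. L i) / 2)))"
proof (induction K)
  case 0
  show ?case
    by (simp add: nn_integral_return)
next
  case (Suc K)
  let ?F = "\<lambda>k. \<integral>\<^sup>+y. ennreal (f y - fstar) \<partial>signsgd_law G x0 \<gamma> k"
  let ?r = "\<lambda>k. ennreal (\<gamma> k) * (\<integral>\<^sup>+x. ennreal (rho_norm G g x) \<partial>signsgd_law G x0 \<gamma> k)"
  let ?q = "\<lambda>k. ennreal ((\<gamma> k)\<^sup>2 * ((\<Sum>i\<in>UNIV. L i) / 2))"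
  have "?F (Suc K) + ?r K \<le> ?F K + ?q K"
    unfolding signsgd_law_Suc by (rule nn_integral_bind_signsgd_step_le[OF \<gamma> signsgd_law_prob])
  then have "?F (Suc K) + (\<Sum>k<Suc K. ?r k) \<le> (?F K + (\<Sum>k<K. ?r k)) + ?q K"
    using add_right_mono[of _ _ "\<Sum>k<K. ?r k"] by (simp add: ac_simps)
  also have "\<dots> \<le> (ennreal (f x0 - fstar) + (\<Sum>k<K. ?q k)) + ?q K"
    using Suc.IH by (rule add_right_mono)
  finally show ?case
    by (simp add: ac_simps)
qed

lemma weighted_sum_exp_rho_norm_le:
  assumes \<gamma>: "\<And>k. \<gamma> k > 0"
  shows "(\<Sum>k<K. \<gamma> k * exp_rho_norm G g x0 \<gamma> k)
    \<le> f x0 - fstar + (\<Sum>k<K. (\<gamma> k)\<^sup>2) * ((\<Sum>i\<in>UNIV. L i) / 2)"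
proof -
  define \<Lambda> where "\<Lambda> = (\<Sum>i\<in>UNIV. L i) / 2"
  have \<Lambda>: "\<Lambda> \<ge> 0" unfolding \<Lambda>_def using L_nonneg by (simp add: sum_nonneg)
  define r where "r k = (\<integral>\<^sup>+x. ennreal (rho_norm G g x) \<partial>signsgd_law G x0 \<gamma> k)" for k
  have bound: "(\<Sum>k<K. ennreal (\<gamma> k) * r k) \<le> ennreal (f x0 - fstar + (\<Sum>k<K. (\<gamma> k)\<^sup>2) * \<Lambda>)" for K
  proof -
    have "(\<Sum>k<K. ennreal (\<gamma> k) * r k)
        \<le> (\<integral>\<^sup>+y. ennreal (f y - fstar) \<partial>signsgd_law G x0 \<gamma> K) + (\<Sum>k<K. ennreal (\<gamma> k) * r k)"
      by simp
    also have "\<dots> \<le> ennreal (f x0 - fstar) + (\<Sum>k<K. ennreal ((\<gamma> k)\<^sup>2 * \<Lambda>))"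
      unfolding r_def \<Lambda>_def using \<gamma> by (intro signsgd_telescoping less_imp_le)
    also have "\<dots> = ennreal (f x0 - fstar + (\<Sum>k<K. (\<gamma> k)\<^sup>2) * \<Lambda>)"
      using lower[of x0] \<Lambda> by (simp add: sum_distrib_right sum_nonneg)
    finally show ?thesis .
  qed
  have r_eq: "r k = ennreal (exp_rho_norm G g x0 \<gamma> k)" for k
  proof -
    \<comment> \<open>exp_rho_norm is a Bochner integral, which is 0 unless rho_norm is integrable; integrability
      comes from the finiteness of the telescoped bound.\<close>
    have "ennreal (\<gamma> k) * r k \<le> (\<Sum>j<Suc k. ennreal (\<gamma> j) * r j)"
      by (rule member_le_sum) auto
    also have "\<dots> < \<top>"
      using bound ennreal_less_top by (rule order_le_less_trans)
    finally have "r k < \<top>"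
      using \<gamma>[of k] by (auto simp: ennreal_mult_less_top)
    moreover have sets_law: "sets (signsgd_law G x0 \<gamma> k) = sets borel"
      using signsgd_law_prob by (simp add: space_prob_algebra)
    ultimately have "integrable (signsgd_law G x0 \<gamma> k) (rho_norm G g)"
      unfolding r_def
      by (intro integrableI_nonneg) (simp_all add: measurable_cong_sets[OF sets_law refl] rho_norm_nonneg)
    then show ?thesis
      unfolding r_def exp_rho_norm_def by (rule nn_integral_eq_integral) (simp add: rho_norm_nonneg)
  qed
  have "ennreal (\<Sum>k<K. \<gamma> k * exp_rho_norm G g x0 \<gamma> k) = (\<Sum>k<K. ennreal (\<gamma> k) * r k)"
    using \<gamma> by (simp add: r_eq ennreal_mult less_imp_le exp_rho_norm_def rho_norm_nonneg
        sum_ennreal[symmetric] sum_nonneg del: sum_ennreal)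
  with bound[of K]
  have "ennreal (\<Sum>k<K. \<gamma> k * exp_rho_norm G g x0 \<gamma> k) \<le> ennreal (f x0 - fstar + (\<Sum>k<K. (\<gamma> k)\<^sup>2) * \<Lambda>)"
    by simp
  moreover have "0 \<le> f x0 - fstar + (\<Sum>k<K. (\<gamma> k)\<^sup>2) * \<Lambda>"
    using lower[of x0] \<Lambda> by (simp add: sum_nonneg)
  ultimately show ?thesis
    by (simp add: \<Lambda>_def)
qed

end

lemma Min_mult_sum_le_weighted_sum:
  fixes w E :: "'a \<Rightarrow> real"
  assumes "finite A" "A \<noteq> {}" "\<And>k. k \<in> A \<Longrightarrow> w k \<ge> 0"
  shows "Min (E ` A) * sum w A \<le> (\<Sum>k\<in>A. w k * E k)"
proof -
  have "Min (E ` A) * sum w A = (\<Sum>k\<in>A. w k * Min (E ` A))"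
    by (subst mult.commute) (rule sum_distrib_right)
  also have "\<dots> \<le> (\<Sum>k\<in>A. w k * E k)"
    using assms by (intro sum_mono mult_left_mono) auto
  finally show ?thesis .
qed

lemma harm_le_one_plus_ln: "n > 0 \<Longrightarrow> harm n \<le> 1 + ln (real n)"
  using euler_mascheroni_sequence_decreasing[of 1 n] by (simp add: harm_def)

lemma decreasing_steps_rate:
  fixes E :: "nat \<Rightarrow> real"
  assumes \<gamma>0: "\<gamma>0 > 0" and K: "K \<ge> 2" and h: "h \<ge> 0" and D: "D \<ge> 0"
    and bound: "(\<Sum>k<K. \<gamma>0 / sqrt (real k + 1) * E k)
      \<le> h + (\<Sum>k<K. (\<gamma>0 / sqrt (real k + 1))\<^sup>2) * (D / 2)"
  shows "Min (E ` {..<K}) \<le> h / (\<gamma>0 * sqrt (real K)) + 3 * \<gamma>0 * D / 2 * (ln (real K) / sqrt (real K))"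
proof -
  define \<gamma> where "\<gamma> k = \<gamma>0 / sqrt (real k + 1)" for k
  define B where "B = h + \<gamma>0\<^sup>2 * (3 * ln (real K)) * (D / 2)"
  have sqrt_K: "sqrt (real K) > 0"
    using K by simp
  have "\<gamma>0 * sqrt (real K) = (\<Sum>k<K. \<gamma>0 / sqrt (real K))"
    using sqrt_K by (simp add: field_simps)
  also have "\<dots> \<le> sum \<gamma> {..<K}"
    unfolding \<gamma>_def using \<gamma>0 by (intro sum_mono divide_left_mono) auto
  finally have sum_\<gamma>: "\<gamma>0 * sqrt (real K) \<le> sum \<gamma> {..<K}" .
  have sum_\<gamma>_pos: "sum \<gamma> {..<K} > 0"
    using sum_\<gamma> \<gamma>0 sqrt_K by (meson less_le_trans mult_pos_pos)
  have ln_K: "2 / 3 \<le> ln (real K)"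
    using ln2_ge_two_thirds ln_le_cancel_iff[of 2 "real K"] K by linarith
  have "(\<Sum>k<K. (\<gamma> k)\<^sup>2) = \<gamma>0\<^sup>2 * harm K"
    by (simp add: \<gamma>_def harm_altdef sum_distrib_left field_simps)
  also have "\<dots> \<le> \<gamma>0\<^sup>2 * (3 * ln (real K))"
    using harm_le_one_plus_ln[of K] ln_K K by (intro mult_left_mono) auto
  finally have sum_\<gamma>2: "(\<Sum>k<K. (\<gamma> k)\<^sup>2) \<le> \<gamma>0\<^sup>2 * (3 * ln (real K))" .
  have "Min (E ` {..<K}) * sum \<gamma> {..<K} \<le> (\<Sum>k<K. \<gamma> k * E k)"
    using K \<gamma>0 by (intro Min_mult_sum_le_weighted_sum) (auto simp: \<gamma>_def lessThan_empty_iff)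
  also have "\<dots> \<le> h + (\<Sum>k<K. (\<gamma> k)\<^sup>2) * (D / 2)"
    using bound by (simp add: \<gamma>_def)
  also have "\<dots> \<le> B"
    unfolding B_def using sum_\<gamma>2 D by (intro add_left_mono mult_right_mono) auto
  finally have "Min (E ` {..<K}) \<le> B / sum \<gamma> {..<K}"
    by (simp add: pos_le_divide_eq[OF sum_\<gamma>_pos])
  also have "\<dots> \<le> B / (\<gamma>0 * sqrt (real K))"
    using sum_\<gamma> sum_\<gamma>_pos \<gamma>0 sqrt_K h D ln_K unfolding B_def by (intro divide_left_mono) auto
  also have "\<dots> = h / (\<gamma>0 * sqrt (real K)) + 3 * \<gamma>0 * D / 2 * (ln (real K) / sqrt (real K))"
    unfolding B_def using \<gamma>0 sqrt_K by (simp add: field_simps power2_eq_square)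
  finally show ?thesis .
qed

lemma constant_step_rate:
  fixes E :: "nat \<Rightarrow> real"
  assumes \<gamma>: "\<gamma> > 0" and K: "K \<ge> 1"
    and bound: "(\<Sum>k<K. \<gamma> * E k) \<le> h + (\<Sum>k<K. \<gamma>\<^sup>2) * (D / 2)"
  shows "1 / real K * (\<Sum>k<K. E k) \<le> h / (\<gamma> * real K) + \<gamma> * D / 2"
proof -
  have "\<gamma> * real K * (1 / real K * (\<Sum>k<K. E k)) \<le> h + real K * \<gamma>\<^sup>2 * (D / 2)"
    using bound K by (simp add: sum_distrib_left)
  then show ?thesis
    using \<gamma> K by (simp add: field_simps power2_eq_square)
qed

theorem theorem1:
  fixes f :: "real^'n \<Rightarrow> real"
    and g :: "real^'n \<Rightarrow> real^'n"
    and G :: "real^'n \<Rightarrow> (real^'n) measure"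
    and L :: "'n \<Rightarrow> real"
    and fstar :: real
    and x0 :: "real^'n"
  assumes grad: "\<And>x. (f has_derivative (\<lambda>h. g x \<bullet> h)) (at x)"
    and lower: "\<And>x. f x \<ge> fstar"
    and L_nonneg: "\<And>i. L i \<ge> 0"
    and smooth: "\<And>x y. f y \<le> f x + g x \<bullet> (y - x) + (\<Sum>i\<in>UNIV. L i / 2 * (y $ i - x $ i)^2)"
    and G_kernel: "G \<in> borel \<rightarrow>\<^sub>M prob_algebra borel"
    and SPB: "\<And>x i. g x $ i \<noteq> 0 \<Longrightarrow> succ_prob G g x i > 1/2"
  shows
    "(let d = real CARD('n); Lbar = (\<Sum>i\<in>UNIV. L i) / d in
      (\<forall>\<gamma>0 > 0. \<forall>K::nat. K \<ge> 2 \<longrightarrow>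
         Min ((\<lambda>k. exp_rho_norm G g x0 (\<lambda>k. \<gamma>0 / sqrt (real k + 1)) k) ` {..<K})
           \<le> (f x0 - fstar) / (\<gamma>0 * sqrt (real K))
              + 3 * \<gamma>0 * d * Lbar / 2 * (ln (real K) / sqrt (real K)))
    \<and> (\<forall>\<gamma> > 0. \<forall>K::nat. K \<ge> 1 \<longrightarrow>
         (1 / real K) * (\<Sum>k<K. exp_rho_norm G g x0 (\<lambda>_. \<gamma>) k)
           \<le> (f x0 - fstar) / (\<gamma> * real K) + \<gamma> * d * Lbar / 2))"
proof -
  interpret signsgd f g G L fstar
    using grad lower L_nonneg smooth G_kernel SPB by unfold_locales
  define D where "D = (\<Sum>i\<in>UNIV. L i)"
  have d_Lbar: "c * real CARD('n) * (D / real CARD('n)) = c * D" for c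
    by simp
  have h: "f x0 - fstar \<ge> 0" and D: "D \<ge> 0"
    using lower L_nonneg by (simp_all add: D_def sum_nonneg)
  show ?thesis
    unfolding Let_def D_def[symmetric] d_Lbar
  proof (intro conjI allI impI)
    fix \<gamma>0 :: real and K :: nat
    assume "\<gamma>0 > 0" "K \<ge> 2"
    then show "Min ((\<lambda>k. exp_rho_norm G g x0 (\<lambda>k. \<gamma>0 / sqrt (real k + 1)) k) ` {..<K})
      \<le> (f x0 - fstar) / (\<gamma>0 * sqrt (real K)) + 3 * \<gamma>0 * D / 2 * (ln (real K) / sqrt (real K))"
      using h D weighted_sum_exp_rho_norm_le[where \<gamma>="\<lambda>k. \<gamma>0 / sqrt (real k + 1)" and K=K]
      by (intro decreasing_steps_rate) (auto simp: D_def)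
  next
    fix \<gamma> :: real and K :: nat
    assume "\<gamma> > 0" "K \<ge> 1"
    then show "1 / real K * (\<Sum>k<K. exp_rho_norm G g x0 (\<lambda>_. \<gamma>) k)
      \<le> (f x0 - fstar) / (\<gamma> * real K) + \<gamma> * D / 2"
      using weighted_sum_exp_rho_norm_le[where \<gamma>="\<lambda>_. \<gamma>" and K=K]
      by (intro constant_step_rate) (auto simp: D_def)
  qed
qed

end
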